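(* Let $G=(\mathbb Z/a_1\mathbb Z)\times\dots\times(\mathbb Z/a_r\mathbb Z)$ be a finite Abelian group with $N=\exp(G)$ odd, and let $f:G\to\mathbb Q$ be rational-valued. Then for every $x\in\operatorname{supp}(\widehat f)$, all denominators below are nonzero and $$\widehat f(x)^{2^{\phi(N)}-1}=\prod_{k=0}^{\phi(N)-1}\left(\frac{\widehat M_3(f;2^kx,2^kx)}{\widehat M_2(f;2^{k+1}x)}\right)^{2^{\phi(N)-1-k}},$$ where $\phi$ is Euler's phi function.
   Context: Elements of $G$ are tuples with componentwise addition modulo $a_k$; $\exp(G)=\min\{n>0: nx=0\ \forall x\in G\}$. Define $\chi(x,y)=\exp\left(2\pi i\sum_{k=1}^r \frac{x[k]y[k]}{a_k}\right)$, $\widehat f(x)=\sum_{y\in G}f(y)\overline{\chi(x,y)}$, and $\operatorname{supp}(\widehat f)=\{x\in G:\widehat f(x)\neq 0\}$. The transformed autocorrelations are $\widehat M_n(f;x_1,\dots,x_{n-1})=\widehat f(x_1)\cdots\widehat f(x_{n-1})\widehat f(-(x_1+\dots+x_{n-1}))$; in particular $\widehat M_3(f;y,y)=\widehat f(y)^2\widehat f(-2y)$ and $\widehat M_2(f;y)=\widehat f(y)\widehat f(-y)$. *)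

theory Defs
  imports "HOL-Analysis.Analysis" "HOL-Number_Theory.Number_Theory"
begin

text \<open>The group G = Z/a_0 x ... x Z/a_(r-1) (0-based indices), elements represented
  as functions nat => int with canonical residues in the first r coordinates and 0 beyond.\<close>

definition grp :: "nat \<Rightarrow> (nat \<Rightarrow> nat) \<Rightarrow> (nat \<Rightarrow> int) set" where
  "grp r a = {x. (\<forall>k<r. 0 \<le> x k \<and> x k < int (a k)) \<and> (\<forall>k\<ge>r. x k = 0)}"

definition gadd :: "nat \<Rightarrow> (nat \<Rightarrow> nat) \<Rightarrow> (nat \<Rightarrow> int) \<Rightarrow> (nat \<Rightarrow> int) \<Rightarrow> (nat \<Rightarrow> int)" where
  "gadd r a x y = (\<lambda>k. if k < r then (x k + y k) mod int (a k) else 0)"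

definition gneg :: "nat \<Rightarrow> (nat \<Rightarrow> nat) \<Rightarrow> (nat \<Rightarrow> int) \<Rightarrow> (nat \<Rightarrow> int)" where
  "gneg r a x = (\<lambda>k. if k < r then (- x k) mod int (a k) else 0)"

definition gsmul :: "nat \<Rightarrow> (nat \<Rightarrow> nat) \<Rightarrow> nat \<Rightarrow> (nat \<Rightarrow> int) \<Rightarrow> (nat \<Rightarrow> int)" where
  "gsmul r a n x = (\<lambda>k. if k < r then (int n * x k) mod int (a k) else 0)"

definition gzero :: "nat \<Rightarrow> int" where
  "gzero = (\<lambda>k. 0)"

definition gexp :: "nat \<Rightarrow> (nat \<Rightarrow> nat) \<Rightarrow> nat" where
  "gexp r a = (LEAST n. n > 0 \<and> (\<forall>x\<in>grp r a. gsmul r a n x = gzero))"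

definition chi :: "nat \<Rightarrow> (nat \<Rightarrow> nat) \<Rightarrow> (nat \<Rightarrow> int) \<Rightarrow> (nat \<Rightarrow> int) \<Rightarrow> complex" where
  "chi r a x y = exp (2 * of_real pi * \<i> *
      (\<Sum>k<r. of_int (x k * y k) / of_nat (a k)))"

definition fhat :: "nat \<Rightarrow> (nat \<Rightarrow> nat) \<Rightarrow> ((nat \<Rightarrow> int) \<Rightarrow> rat) \<Rightarrow> (nat \<Rightarrow> int) \<Rightarrow> complex" where
  "fhat r a f x = (\<Sum>y\<in>grp r a. of_real (of_rat (f y)) * cnj (chi r a x y))"

definition supp_fhat :: "nat \<Rightarrow> (nat \<Rightarrow> nat) \<Rightarrow> ((nat \<Rightarrow> int) \<Rightarrow> rat) \<Rightarrow> (nat \<Rightarrow> int) set" where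
  "supp_fhat r a f = {x \<in> grp r a. fhat r a f x \<noteq> 0}"

definition M3hat :: "nat \<Rightarrow> (nat \<Rightarrow> nat) \<Rightarrow> ((nat \<Rightarrow> int) \<Rightarrow> rat) \<Rightarrow> (nat \<Rightarrow> int) \<Rightarrow> (nat \<Rightarrow> int) \<Rightarrow> complex" where
  "M3hat r a f x1 x2 = fhat r a f x1 * fhat r a f x2 * fhat r a f (gneg r a (gadd r a x1 x2))"

definition M2hat :: "nat \<Rightarrow> (nat \<Rightarrow> nat) \<Rightarrow> ((nat \<Rightarrow> int) \<Rightarrow> rat) \<Rightarrow> (nat \<Rightarrow> int) \<Rightarrow> complex" where
  "M2hat r a f x1 = fhat r a f x1 * fhat r a f (gneg r a x1)"

end

theory Submission
  imports Defs
    "Berlekamp_Zassenhaus.Factor_Bound"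
    "HOL-Computational_Algebra.Squarefree"
begin

(* Write F j for fhat (2^j x). Since f is rational, fhat (-y) is the conjugate of fhat y, so the
   k-th factor of the product is F_k^2 conj(F_(k+1)) / |F_(k+1)|^2 = F_k^2 / F_(k+1). The product
   telescopes to F_0^(2^t) / F_t with t = phi(N), and F_t = F_0 since 2^t = 1 mod N by Euler.

   The substance is that no F_j vanishes. As every a_k divides N, fhat (n x) = P(w^n) for one
   rational polynomial P and an N-th root of unity w, so it suffices that a rational polynomial
   vanishing at z^2 vanishes at z when z^N = 1 and N is odd. Otherwise, clearing denominators and
   splitting off common factors with X^N - 1 yields integer polynomials with h k = X^N - 1,
   d dividing both k and h(X^2), and d nonconstant with unit leading coefficient. Modulo 2,
   composing with X^2 is squaring and X^N - 1 is squarefree, which forces d to be a unit. *)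

lemma pcompose_X_power_card_eq_power:
  fixes q :: "'a :: prime_card mod_ring poly"
  shows "q \<circ>\<^sub>p Polynomial.monom 1 CARD('a) = q ^ CARD('a)"
proof (induction q rule: pCons_induct)
  case 0
  then show ?case by simp
next
  case (pCons c q)
  have "pCons c q ^ CARD('a) = ([:c:] + Polynomial.monom 1 1 * q) ^ CARD('a)"
    by (simp add: monom_Suc)
  also have "\<dots> = [:c:] ^ CARD('a) + (Polynomial.monom 1 1 * q) ^ CARD('a)"
    by (rule freshmans_dream) (simp_all add: prime_card)
  also have "\<dots> = [:c:] + Polynomial.monom 1 CARD('a) * q ^ CARD('a)"
    using finite_field_power_card_eq_same[of c]
    by (simp add: power_mult_distrib monom_power poly_const_pow)
  also have "\<dots> = pCons c q \<circ>\<^sub>p Polynomial.monom 1 CARD('a)"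
    by (simp add: pCons.IH)
  finally show ?case ..
qed

lemma squarefree_X_power_minus_1:
  assumes "of_nat N \<noteq> (0 :: 'a :: field)"
  shows "squarefree ([:0, 1:] ^ N - 1 :: 'a poly)"
proof (rule squarefreeI)
  fix g :: "'a poly"
  assume "g ^ 2 dvd [:0, 1:] ^ N - 1"
  then obtain s where s: "[:0, 1:] ^ N - 1 = g * g * s"
    by (metis dvdE power2_eq_square)
  obtain n where N: "N = Suc n"
    using assms by (cases N) auto
  have "g dvd pderiv (g * g * s)"
    unfolding pderiv_mult by (intro dvd_add dvd_mult dvd_mult2 dvd_refl)
  also have "pderiv (g * g * s) = Polynomial.smult (of_nat N) ([:0, 1:] ^ n)"
    unfolding s[symmetric] N
    by (simp only: pderiv_diff pderiv_1 diff_zero pderiv_power_Suc) (simp add: pderiv_pCons)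
  finally have "g dvd [:0, 1:] ^ n"
    using assms by (simp add: dvd_smult_cancel)
  moreover have "g dvd [:0, 1:] ^ N - 1"
    unfolding s by simp
  ultimately have "g dvd [:0, 1:] * [:0, 1:] ^ n - ([:0, 1:] ^ N - 1)"
    by (rule dvd_diff[OF dvd_mult])
  then show "g dvd 1"
    by (simp only: N power_Suc diff_diff_eq2 add_diff_cancel_left')
qed

lemma is_unit_if_squarefree_mult_dvd_power:
  fixes h k d :: "'a :: factorial_semiring"
  assumes "squarefree (h * k)" and "d dvd k" and "d dvd h ^ n"
  shows "is_unit d"
proof (rule ccontr)
  assume "\<not> is_unit d"
  moreover have "d \<noteq> 0"
    using assms(1,2) by auto
  ultimately obtain p where p: "prime p" "p dvd d"
    using prime_divisor_exists by blast
  then have "p dvd h"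
    using assms(3) by (meson dvd_trans prime_dvd_power)
  moreover have "p dvd k"
    using p(2) assms(2) by (rule dvd_trans)
  ultimately have "p ^ 2 dvd h * k"
    by (simp add: power2_eq_square mult_dvd_mono)
  with assms(1) have "is_unit p"
    by (rule squarefreeD)
  with p show False
    by simp
qed

lemma is_unit_common_divisor_cofactor_pcompose:
  fixes h k d :: "'a :: prime_card mod_ring poly"
  assumes "[:0, 1:] ^ N - 1 = h * k" and "of_nat N \<noteq> (0 :: 'a mod_ring)"
    and "d dvd k" and "d dvd h \<circ>\<^sub>p Polynomial.monom 1 CARD('a)"
  shows "is_unit d"
  using squarefree_X_power_minus_1[OF assms(2)] assms(3,4)
  unfolding assms(1) pcompose_X_power_card_eq_power
  by (rule is_unit_if_squarefree_mult_dvd_power)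

interpretation of_rat_complex: map_poly_inj_idom_hom "of_rat :: rat \<Rightarrow> complex" ..

lemma poly_gcd_int_poly_eq_0:
  fixes p q :: "int poly" and w :: complex
  assumes "poly (of_int_poly p) w = 0" and "poly (of_int_poly q) w = 0"
  shows "poly (of_int_poly (gcd p q)) w = 0"
proof (cases "gcd p q = 0")
  case False
  have of_rat_of_int: "map_poly (of_rat :: rat \<Rightarrow> complex) (of_int_poly s) = of_int_poly s" for s
    by (simp add: map_poly_map_poly o_def)
  obtain u v :: "rat poly"
    where uv: "u * of_int_poly p + v * of_int_poly q = gcd (of_int_poly p) (of_int_poly q)"
    using bezout_coefficients_fst_snd by blast
  have "poly (map_poly (of_rat :: rat \<Rightarrow> complex) (gcd (of_int_poly p) (of_int_poly q))) w = 0"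
    unfolding uv[symmetric] using assms by (simp add: hom_distribs of_rat_of_int)
  then have "of_rat (inverse (rat_of_int (lead_coeff (gcd p q))))
      * poly (of_int_poly (gcd p q)) w = (0 :: complex)"
    unfolding gcd_rat_to_gcd_int by (simp add: hom_distribs of_rat_of_int)
  with False show ?thesis
    by auto
qed simp

lemma is_unit_lead_coeff_dvd_monic:
  fixes d m :: "int poly"
  assumes "d dvd m" and "lead_coeff m = 1"
  shows "is_unit (lead_coeff d)"
proof -
  obtain k where "m = d * k"
    using assms(1) by (rule dvdE)
  then have "lead_coeff d * lead_coeff k = 1"
    using assms(2) by (simp add: lead_coeff_mult)
  then show ?thesis
    by (metis dvd_triv_left)
qed

lemma degree_common_divisor_cofactor_pcompose_eq_0:
  fixes h k d :: "int poly"
  assumes hk: "[:0, 1:] ^ N - 1 = h * k" and N: "of_nat N \<noteq> (0 :: 'p :: prime_card mod_ring)"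
    and "d dvd k" and "d dvd h \<circ>\<^sub>p Polynomial.monom 1 CARD('p)"
  shows "degree d = 0"
proof -
  define reduce :: "int poly \<Rightarrow> 'p mod_ring poly" where "reduce = of_int_poly"
  have "is_unit (reduce d)"
  proof (rule is_unit_common_divisor_cofactor_pcompose[OF _ N])
    show "[:0, 1:] ^ N - 1 = reduce h * reduce k"
      using arg_cong[OF hk, of reduce] by (simp add: reduce_def hom_distribs)
    show "reduce d dvd reduce k"
      using assms(3) by (simp add: reduce_def)
    have "reduce (h \<circ>\<^sub>p Polynomial.monom 1 CARD('p)) = reduce h \<circ>\<^sub>p Polynomial.monom 1 CARD('p)"
      by (simp add: reduce_def of_int_hom.map_poly_pcompose map_poly_monom)
    then show "reduce d dvd reduce h \<circ>\<^sub>p Polynomial.monom 1 CARD('p)"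
      using assms(4) unfolding reduce_def by (metis of_int_poly_hom.hom_dvd)
  qed
  have "d dvd [:0, 1:] ^ N - 1"
    unfolding hk using assms(3) by (rule dvd_mult)
  moreover have "lead_coeff ([:0, 1:] ^ N - 1 :: int poly) = 1"
  proof -
    have "degree (-1 :: int poly) < degree ([:0, 1 :: int:] ^ N)"
      using N by (cases N) (simp_all add: degree_power_eq)
    then have "lead_coeff (-1 + [:0, 1 :: int:] ^ N) = lead_coeff ([:0, 1 :: int:] ^ N)"
      by (rule lead_coeff_add_le)
    then show ?thesis
      by (simp add: lead_coeff_power)
  qed
  ultimately have "is_unit (lead_coeff d)"
    by (rule is_unit_lead_coeff_dvd_monic)
  then have "is_unit (of_int (lead_coeff d) :: 'p mod_ring)"
    by (rule of_int_hom.hom_dvd_1)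
  then have "degree (reduce d) = degree d"
    unfolding reduce_def by (intro degree_map_poly) auto
  moreover have "degree (reduce d) = 0"
    using \<open>is_unit (reduce d)\<close> is_unit_iff_degree[of "reduce d"] by auto
  ultimately show ?thesis
    by simp
qed

lemma int_poly_root_of_unity_from_power_card:
  fixes P :: "int poly" and z :: complex
  assumes zN: "z ^ N = 1" and N: "of_nat N \<noteq> (0 :: 'p :: prime_card mod_ring)"
    and root: "poly (of_int_poly P) (z ^ CARD('p)) = 0"
  shows "poly (of_int_poly P) z = 0"
proof (rule ccontr)
  assume Pz: "poly (of_int_poly P) z \<noteq> 0"
  define m :: "int poly" where "m = [:0, 1:] ^ N - 1"
  have m_root: "poly (of_int_poly m) w = 0" if "w ^ N = 1" for w :: complex
    using that by (simp add: m_def hom_distribs)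
  have "N > 0"
    using N by (intro gr0I) simp
  then have "poly m 0 \<noteq> 0"
    by (simp add: m_def power_0_left)
  then have "m \<noteq> 0"
    by auto
  define h where "h = gcd P m"
  obtain k where mk: "m = h * k"
    unfolding h_def by (metis dvdE gcd_dvd2)
  have "(z ^ CARD('p)) ^ N = 1"
    using zN by (metis mult.commute power_mult power_one)
  then have "poly (of_int_poly h) (z ^ CARD('p)) = 0"
    unfolding h_def using root m_root by (blast intro: poly_gcd_int_poly_eq_0)
  then have H_root: "poly (of_int_poly (h \<circ>\<^sub>p Polynomial.monom 1 CARD('p))) z = 0"
    by (simp add: hom_distribs poly_pcompose poly_monom)
  have "poly (of_int_poly h) z \<noteq> 0"
    using Pz unfolding h_def by (metis dvdE gcd_dvd1 of_int_poly_hom.hom_mult poly_mult mult_zero_left)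
  then have k_root: "poly (of_int_poly k) z = 0"
    using m_root[OF zN] unfolding mk by (simp add: hom_distribs)
  define d where "d = gcd (h \<circ>\<^sub>p Polynomial.monom 1 CARD('p)) k"
  have "degree d = 0"
    using mk[unfolded m_def] N unfolding d_def by (rule degree_common_divisor_cofactor_pcompose_eq_0) simp_all
  then obtain c where "d = [:c:]"
    by (rule degree_eq_zeroE)
  moreover have "poly (of_int_poly d) z = 0"
    unfolding d_def using H_root k_root by (rule poly_gcd_int_poly_eq_0)
  ultimately have "d = 0"
    by (simp add: of_int_hom.map_poly_pCons_hom)
  then show False
    using \<open>m \<noteq> 0\<close> mk unfolding d_def by simp
qed

lemma rat_poly_root_of_unity_from_square:
  fixes P :: "rat poly" and z :: complex
  assumes "odd N" and "z ^ N = 1" and "poly (map_poly of_rat P) (z ^ 2) = 0"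
  shows "poly (map_poly of_rat P) z = 0"
proof -
  obtain c q where "rat_to_normalized_int_poly P = (c, q)"
    by force
  then have P: "P = Polynomial.smult c (of_int_poly q)" and "c > 0"
    using rat_to_normalized_int_poly by auto
  have image: "map_poly (of_rat :: rat \<Rightarrow> complex) P = Polynomial.smult (of_rat c) (of_int_poly q)"
    unfolding P by (simp add: hom_distribs map_poly_map_poly o_def)
  \<comment> \<open>\<open>bool mod_ring\<close> is the field with two elements\<close>
  have "of_nat N \<noteq> (0 :: bool mod_ring)"
    using assms(1) of_nat_0_mod_ring_dvd by fastforce
  moreover have "poly (of_int_poly q) (z ^ CARD(bool)) = 0"
    using assms(3) \<open>c > 0\<close> unfolding image by simp
  ultimately have "poly (of_int_poly q) z = 0"
    by (rule int_poly_root_of_unity_from_power_card[OF assms(2)])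
  then show ?thesis
    unfolding image by simp
qed

lemma gsmul_1: "x \<in> grp r a \<Longrightarrow> gsmul r a 1 x = x"
  unfolding gsmul_def grp_def by (rule ext) auto

lemma gexp_annihilates:
  assumes "\<forall>k<r. a k > 0" and "x \<in> grp r a"
  shows "gsmul r a (gexp r a) x = gzero"
proof -
  define P where "P n \<longleftrightarrow> n > 0 \<and> (\<forall>x\<in>grp r a. gsmul r a n x = gzero)" for n
  have "P (\<Prod>k<r. a k)"
    using assms(1) by (auto simp: P_def gsmul_def gzero_def dvd_prodI
        intro!: prod_pos ext dvd_imp_mod_0 dvd_mult2)
  then have "P (gexp r a)"
    unfolding gexp_def P_def[symmetric] by (rule LeastI)
  then show ?thesis
    using assms(2) by (simp add: P_def)
qed

lemma dvd_gexp:
  assumes "\<forall>k<r. a k > 0" and "k < r"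
  shows "a k dvd gexp r a"
proof (cases "a k = 1")
  case False
  define e :: "nat \<Rightarrow> int" where "e j = (if j = k then 1 else 0)" for j
  have "e \<in> grp r a"
    using assms False by (auto simp: grp_def e_def)
  then have "gsmul r a (gexp r a) e k = 0"
    using gexp_annihilates[OF assms(1)] by (simp add: gzero_def)
  then show ?thesis
    using assms(2) by (simp add: gsmul_def e_def dvd_eq_mod_eq_0 flip: of_nat_mod)
qed simp

lemma exp_2pi_i_of_int_div_cong:
  assumes "[m = m'] (mod int n)"
  shows "exp (2 * of_real pi * \<i> * (of_int m / of_nat n))
    = exp (2 * of_real pi * \<i> * (of_int m' / of_nat n))"
proof (cases "n = 0")
  case False
  obtain t where t: "m' = m + int n * t"
    using assms by (auto simp: cong_iff_lin)
  have "of_int m' / of_nat n = of_int m / of_nat n + (of_int t :: complex)"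
    using False by (simp add: t add_divide_distrib)
  then have "2 * of_real pi * \<i> * (of_int m' / of_nat n)
      = 2 * of_real pi * \<i> * (of_int m / of_nat n) + \<i> * (of_int t * (of_real pi * 2))"
    by (simp add: distrib_left mult_ac)
  then show ?thesis
    by simp
qed (use assms in \<open>simp add: cong_def\<close>)

lemma chi_cong:
  assumes "\<forall>k<r. [x k = x' k] (mod int (a k))"
  shows "chi r a x y = chi r a x' y"
proof -
  have "exp (2 * of_real pi * \<i> * (of_int (x k * y k) / of_nat (a k)))
      = exp (2 * of_real pi * \<i> * (of_int (x' k * y k) / of_nat (a k)))" if "k < r" for k
    using assms that by (intro exp_2pi_i_of_int_div_cong cong_mult) auto
  then show ?thesis
    unfolding chi_def sum_distrib_left exp_sum[OF finite_lessThan] by simp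
qed

lemma chi_uminus: "chi r a (\<lambda>k. - x k) y = cnj (chi r a x y)"
  unfolding chi_def exp_cnj by (simp add: sum_negf)

lemma fhat_cong:
  assumes "\<forall>k<r. [x k = x' k] (mod int (a k))"
  shows "fhat r a f x = fhat r a f x'"
  unfolding fhat_def chi_cong[OF assms] ..

lemma fhat_gneg: "fhat r a f (gneg r a x) = cnj (fhat r a f x)"
proof -
  have "fhat r a f (gneg r a x) = fhat r a f (\<lambda>k. - x k)"
    by (rule fhat_cong) (simp add: gneg_def cong_def)
  then show ?thesis
    unfolding fhat_def chi_uminus by simp
qed

lemma fhat_gsmul_cong:
  assumes "\<forall>k<r. a k dvd N" and "[m = n] (mod N)"
  shows "fhat r a f (gsmul r a m x) = fhat r a f (gsmul r a n x)"
proof (rule fhat_cong, intro allI impI)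
  fix k
  assume "k < r"
  have "[m = n] (mod a k)"
    using assms(2) by (rule cong_dvd_modulus_nat) (use assms(1) \<open>k < r\<close> in blast)
  then have "[int m * x k = int n * x k] (mod int (a k))"
    unfolding cong_int_iff[symmetric] by (rule cong_scalar_right)
  then show "[gsmul r a m x k = gsmul r a n x k] (mod int (a k))"
    using \<open>k < r\<close> by (simp add: gsmul_def cong_def)
qed

lemma fhat_gadd_gsmul_self:
  "fhat r a f (gadd r a (gsmul r a n x) (gsmul r a n x)) = fhat r a f (gsmul r a (2 * n) x)"
  by (rule fhat_cong) (simp add: gadd_def gsmul_def cong_def mod_mult_right_eq mult.assoc flip: mult_2)

lemma of_real_of_rat: "of_real (of_rat q) = (of_rat q :: 'a :: real_field)"
  by (cases q) (simp add: of_rat_rat)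

definition fourier_root :: "nat \<Rightarrow> complex" where
  "fourier_root N = exp (- 2 * of_real pi * \<i> / of_nat N)"

lemma fourier_root_power_eq_1:
  assumes "N > 0"
  shows "fourier_root N ^ N = 1"
proof -
  have "fourier_root N ^ N = exp (of_nat N * (- 2 * of_real pi * \<i> / of_nat N))"
    unfolding fourier_root_def by (rule exp_of_nat_mult[symmetric])
  also have "\<dots> = 1"
    using assms by (simp add: exp_minus)
  finally show ?thesis .
qed

(* Since a k divides N, x k * y k / a k = x k * y k * (N div a k) / N; the exponent is a natural
   number because elements of grp r a have nonnegative coordinates. *)
definition fourier_exponent ::
    "nat \<Rightarrow> (nat \<Rightarrow> nat) \<Rightarrow> nat \<Rightarrow> (nat \<Rightarrow> int) \<Rightarrow> (nat \<Rightarrow> int) \<Rightarrow> nat" where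
  "fourier_exponent r a N x y = (\<Sum>k<r. nat (x k * y k) * (N div a k))"

definition fourier_poly ::
    "nat \<Rightarrow> (nat \<Rightarrow> nat) \<Rightarrow> nat \<Rightarrow> ((nat \<Rightarrow> int) \<Rightarrow> rat) \<Rightarrow> (nat \<Rightarrow> int) \<Rightarrow> rat poly" where
  "fourier_poly r a N f x = (\<Sum>y\<in>grp r a. Polynomial.monom (f y) (fourier_exponent r a N x y))"

lemma cnj_chi_scaled_eq_fourier_root_power:
  assumes "\<forall>k<r. a k dvd N" and "N > 0" and "x \<in> grp r a" and "y \<in> grp r a"
  shows "cnj (chi r a (\<lambda>k. int n * x k) y) = fourier_root N ^ (n * fourier_exponent r a N x y)"
proof -
  have "of_int (int n * x k * y k) / of_nat (a k)
      = of_nat n * of_nat (nat (x k * y k) * (N div a k)) / (of_nat N :: complex)" if "k < r" for k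
  proof -
    have "x k * y k \<ge> 0"
      using assms(3,4) \<open>k < r\<close> by (simp add: grp_def)
    moreover have "of_nat N = of_nat (a k) * (of_nat (N div a k) :: complex)"
      using assms(1) \<open>k < r\<close> by (metis dvd_mult_div_cancel of_nat_mult)
    ultimately show ?thesis
      using assms(2) by (auto simp: field_simps)
  qed
  then have "(\<Sum>k<r. of_int (int n * x k * y k) / of_nat (a k))
      = of_nat (n * fourier_exponent r a N x y) / (of_nat N :: complex)"
    by (simp add: fourier_exponent_def sum_divide_distrib sum_distrib_left)
  then have "cnj (chi r a (\<lambda>k. int n * x k) y)
      = exp (- (2 * of_real pi * \<i> * (of_nat (n * fourier_exponent r a N x y) / of_nat N)))"
    unfolding chi_def exp_cnj by simp
  also have "\<dots> = exp (of_nat (n * fourier_exponent r a N x y) * (- 2 * of_real pi * \<i> / of_nat N))"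
    by (simp add: divide_inverse mult_ac)
  finally show ?thesis
    unfolding fourier_root_def exp_of_nat_mult .
qed

lemma fhat_gsmul_eq_poly_fourier_root:
  assumes "\<forall>k<r. a k dvd N" and "N > 0" and "x \<in> grp r a"
  shows "fhat r a f (gsmul r a n x) = poly (map_poly of_rat (fourier_poly r a N f x)) (fourier_root N ^ n)"
proof -
  have "fhat r a f (gsmul r a n x) = fhat r a f (\<lambda>k. int n * x k)"
    by (rule fhat_cong) (simp add: gsmul_def cong_def)
  also have "\<dots> = (\<Sum>y\<in>grp r a. of_rat (f y) * (fourier_root N ^ n) ^ fourier_exponent r a N x y)"
    unfolding fhat_def power_mult[symmetric]
    by (rule sum.cong) (simp_all add: assms cnj_chi_scaled_eq_fourier_root_power of_real_of_rat)
  also have "\<dots> = poly (map_poly of_rat (fourier_poly r a N f x)) (fourier_root N ^ n)"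
    by (simp add: fourier_poly_def of_rat_complex.hom_sum poly_sum map_poly_monom poly_monom)
  finally show ?thesis .
qed

lemma fhat_gsmul_double_neq_0:
  assumes "\<forall>k<r. a k dvd N" and "odd N" and "x \<in> grp r a"
    and "fhat r a f (gsmul r a n x) \<noteq> 0"
  shows "fhat r a f (gsmul r a (2 * n) x) \<noteq> 0"
proof -
  define P where "P = map_poly (of_rat :: rat \<Rightarrow> complex) (fourier_poly r a N f x)"
  define z where "z = fourier_root N ^ n"
  have N: "N > 0"
    using assms(2) by (rule odd_pos)
  note fhat_eq_poly = fhat_gsmul_eq_poly_fourier_root[where f = f, OF assms(1) N assms(3), folded P_def]
  have "z ^ N = (fourier_root N ^ N) ^ n"
    unfolding z_def power_mult[symmetric] by (simp only: mult.commute)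
  also have "\<dots> = 1"
    by (simp add: fourier_root_power_eq_1[OF N])
  finally have "z ^ N = 1" .
  moreover have "poly P z \<noteq> 0"
    using assms(4) unfolding fhat_eq_poly z_def .
  ultimately have "poly P (z ^ 2) \<noteq> 0"
    using rat_poly_root_of_unity_from_square[OF assms(2)] unfolding P_def by blast
  then show ?thesis
    unfolding fhat_eq_poly z_def power_mult[symmetric] mult.commute[of 2] .
qed

lemma fhat_gsmul_two_power_neq_0:
  assumes "\<forall>k<r. a k dvd N" and "odd N" and "x \<in> grp r a" and "fhat r a f x \<noteq> 0"
  shows "fhat r a f (gsmul r a (2 ^ j) x) \<noteq> 0"
proof (induction j)
  case 0
  show ?case
    unfolding power_0 gsmul_1[OF assms(3)] by (rule assms(4))
next
  case (Suc j)
  then show ?case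
    unfolding power_Suc by (rule fhat_gsmul_double_neq_0[OF assms(1-3)])
qed

lemma M2hat_eq: "M2hat r a f y = fhat r a f y * cnj (fhat r a f y)"
  unfolding M2hat_def fhat_gneg ..

lemma M3hat_diag_eq: "M3hat r a f y y = fhat r a f y ^ 2 * cnj (fhat r a f (gadd r a y y))"
  unfolding M3hat_def fhat_gneg by (simp add: power2_eq_square)

lemma M3hat_div_M2hat_gsmul:
  assumes "fhat r a f (gsmul r a (2 * n) x) \<noteq> 0"
  shows "M3hat r a f (gsmul r a n x) (gsmul r a n x) / M2hat r a f (gsmul r a (2 * n) x)
    = fhat r a f (gsmul r a n x) ^ 2 / fhat r a f (gsmul r a (2 * n) x)"
  using assms unfolding M3hat_diag_eq M2hat_eq fhat_gadd_gsmul_self by simp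

lemma prod_square_ratio_telescope:
  fixes F :: "nat \<Rightarrow> 'a :: field"
  assumes "\<And>j. F j \<noteq> 0"
  shows "(\<Prod>k<n. (F k ^ 2 / F (k + 1)) ^ 2 ^ (n - 1 - k)) = F 0 ^ 2 ^ n / F n"
proof (induction n)
  case 0
  then show ?case
    using assms[of 0] by simp
next
  case (Suc n)
  have "(F k ^ 2 / F (k + 1)) ^ 2 ^ (Suc n - 1 - k) = ((F k ^ 2 / F (k + 1)) ^ 2 ^ (n - 1 - k)) ^ 2"
    if "k < n" for k
  proof -
    have "Suc n - 1 - k = Suc (n - 1 - k)"
      using that by simp
    then show ?thesis
      by (simp add: power_mult[symmetric] mult.commute)
  qed
  then have "(\<Prod>k<Suc n. (F k ^ 2 / F (k + 1)) ^ 2 ^ (Suc n - 1 - k))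
      = (\<Prod>k<n. ((F k ^ 2 / F (k + 1)) ^ 2 ^ (n - 1 - k)) ^ 2) * (F n ^ 2 / F (n + 1))"
    by simp
  also have "\<dots> = (F 0 ^ 2 ^ n / F n) ^ 2 * (F n ^ 2 / F (n + 1))"
    by (simp only: prod_power_distrib[symmetric] Suc.IH)
  also have "\<dots> = F 0 ^ 2 ^ Suc n / F (Suc n)"
    using assms[of n] by (simp add: power_divide power_mult[symmetric] mult.commute)
  finally show ?case .
qed

lemma prod_square_ratio_telescope_periodic:
  fixes F :: "nat \<Rightarrow> 'a :: field"
  assumes "\<And>j. F j \<noteq> 0" and "F n = F 0"
  shows "(\<Prod>k<n. (F k ^ 2 / F (k + 1)) ^ 2 ^ (n - 1 - k)) = F 0 ^ (2 ^ n - 1)"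
  using prod_square_ratio_telescope[of F n, OF assms(1)] assms power_diff[of "F 0" 1 "2 ^ n"] by simp

theorem theorem3:
  fixes r :: nat and a :: "nat \<Rightarrow> nat" and f :: "(nat \<Rightarrow> int) \<Rightarrow> rat" and x :: "nat \<Rightarrow> int"
  assumes "\<forall>k<r. a k > 0"
    and "odd (gexp r a)"
    and "x \<in> supp_fhat r a f"
  shows "(\<forall>k<totient (gexp r a). M2hat r a f (gsmul r a (2 ^ (k + 1)) x) \<noteq> 0)
    \<and> fhat r a f x ^ (2 ^ totient (gexp r a) - 1) =
      (\<Prod>k<totient (gexp r a).
         (M3hat r a f (gsmul r a (2 ^ k) x) (gsmul r a (2 ^ k) x)
            / M2hat r a f (gsmul r a (2 ^ (k + 1)) x)) ^ (2 ^ (totient (gexp r a) - 1 - k)))"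
proof -
  define N where "N = gexp r a"
  define t where "t = totient N"
  define F where "F j = fhat r a f (gsmul r a (2 ^ j) x)" for j
  have dvd: "\<forall>k<r. a k dvd N"
    unfolding N_def using assms(1) by (auto intro: dvd_gexp)
  have x: "x \<in> grp r a" "fhat r a f x \<noteq> 0"
    using assms(3) by (auto simp: supp_fhat_def)
  have F_neq_0: "F j \<noteq> 0" for j
    unfolding F_def using dvd assms(2) x unfolding N_def by (rule fhat_gsmul_two_power_neq_0)
  have F_0: "fhat r a f x = F 0"
    unfolding F_def power_0 gsmul_1[OF x(1)] ..
  have "[2 ^ t = 1] (mod N)"
    unfolding t_def by (rule euler_theorem) (use assms(2) in \<open>simp add: N_def coprime_commute\<close>)
  then have "F t = F 0"
    unfolding F_def by (intro fhat_gsmul_cong[OF dvd]) simp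
  have ratio: "M3hat r a f (gsmul r a (2 ^ k) x) (gsmul r a (2 ^ k) x)
      / M2hat r a f (gsmul r a (2 ^ (k + 1)) x) = F k ^ 2 / F (k + 1)" for k
    using M3hat_div_M2hat_gsmul[of r a f "2 ^ k" x] F_neq_0[of "k + 1"] by (simp add: F_def)
  have "M2hat r a f (gsmul r a (2 ^ (k + 1)) x) \<noteq> 0" for k
    using F_neq_0[of "k + 1"] unfolding F_def M2hat_eq by simp
  then show ?thesis
    unfolding N_def[symmetric] t_def[symmetric] ratio F_0
      prod_square_ratio_telescope_periodic[OF F_neq_0 \<open>F t = F 0\<close>]
    by blast
qed

end
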